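(* Let $A$ be an evolution algebra with natural basis $B=\{e_i:i\in\Lambda\}$ and structure matrix $(\omega_{ki})$. Then $M$ is a maximal modular ideal of $A$ if and only if $M=\mathrm{lin}\{e_i:i\in\Lambda\setminus\{i_0\}\}$ for some $i_0\in\Lambda$ such that $\omega_{i_0i_0}\neq0$ and $i_0\notin D(k)$ for every $k\in\Lambda\setminus\{i_0\}$; in that case $\frac{1}{\omega_{i_0i_0}}e_{i_0}$ is a modular unit for $M$. Consequently every maximal modular ideal of $A$ has codimension one.
   Context: An evolution algebra is an algebra $A$ over $\mathbb{K}\in\{\mathbb{R},\mathbb{C}\}$ with a basis $\{e_i:i\in\Lambda\}$ (natural basis) with $e_ie_j=0$ for $i\neq j$; write $e_i^2=\sum_k\omega_{ki}e_k$. An ideal $M$ is modular if some $u\in A$ (modular unit) satisfies $a-au\in M$ for all $a\in A$; a maximal modular ideal is a proper modular ideal maximal among proper modular ideals. Descendents: $D^1(i)=\{j:\omega_{ji}\neq0\}$, $D^n(i)=\bigcup_{j\in D^{n-1}(i)}D^1(j)$, $D(i)=\bigcup_{n\ge1}D^n(i)$. *)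

theory Defs
  imports Complex_Main "HOL-Library.Function_Algebras"
begin

text \<open>Elements are finitely supported coefficient
functions 'i => K; the structure matrix is om k i (so e_i^2 = sum_k om k i e_k).\<close>

definition evo_carrier :: "('i \<Rightarrow> 'k::field) set" where
  "evo_carrier = {x. finite {i. x i \<noteq> 0}}"

definition evo_scale :: "'k::field \<Rightarrow> ('i \<Rightarrow> 'k) \<Rightarrow> ('i \<Rightarrow> 'k)" where
  "evo_scale c x = (\<lambda>j. c * x j)"

definition evo_basis :: "'i \<Rightarrow> ('i \<Rightarrow> 'k::field)" where
  "evo_basis i = (\<lambda>j. if j = i then 1 else 0)"

text \<open>Product: (sum a_i e_i)(sum b_j e_j) = sum_i a_i b_i e_i^2.\<close>
definition evo_mult :: "('i \<Rightarrow> 'i \<Rightarrow> 'k::field) \<Rightarrow> ('i \<Rightarrow> 'k) \<Rightarrow> ('i \<Rightarrow> 'k) \<Rightarrow> ('i \<Rightarrow> 'k)" where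
  "evo_mult om x y = (\<lambda>k. \<Sum>i\<in>{i. x i \<noteq> 0}. x i * y i * om k i)"

definition evo_ideal :: "('i \<Rightarrow> 'i \<Rightarrow> 'k::field) \<Rightarrow> ('i \<Rightarrow> 'k) set \<Rightarrow> bool" where
  "evo_ideal om M \<longleftrightarrow> M \<subseteq> evo_carrier \<and> module.subspace evo_scale M \<and>
     (\<forall>a\<in>evo_carrier. \<forall>m\<in>M. evo_mult om a m \<in> M \<and> evo_mult om m a \<in> M)"

definition evo_modular_unit :: "('i \<Rightarrow> 'i \<Rightarrow> 'k::field) \<Rightarrow> ('i \<Rightarrow> 'k) set \<Rightarrow> ('i \<Rightarrow> 'k) \<Rightarrow> bool" where
  "evo_modular_unit om M u \<longleftrightarrow> u \<in> evo_carrier \<and>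
     (\<forall>a\<in>evo_carrier. a - evo_mult om a u \<in> M)"

definition evo_modular_ideal :: "('i \<Rightarrow> 'i \<Rightarrow> 'k::field) \<Rightarrow> ('i \<Rightarrow> 'k) set \<Rightarrow> bool" where
  "evo_modular_ideal om M \<longleftrightarrow> evo_ideal om M \<and> (\<exists>u. evo_modular_unit om M u)"

definition evo_proper_modular :: "('i \<Rightarrow> 'i \<Rightarrow> 'k::field) \<Rightarrow> ('i \<Rightarrow> 'k) set \<Rightarrow> bool" where
  "evo_proper_modular om M \<longleftrightarrow> evo_modular_ideal om M \<and> M \<noteq> evo_carrier"

definition evo_maximal_modular :: "('i \<Rightarrow> 'i \<Rightarrow> 'k::field) \<Rightarrow> ('i \<Rightarrow> 'k) set \<Rightarrow> bool" where
  "evo_maximal_modular om M \<longleftrightarrow> evo_proper_modular om M \<and>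
     (\<forall>N. evo_proper_modular om N \<and> M \<subseteq> N \<longrightarrow> N = M)"

fun desc :: "('i \<Rightarrow> 'i \<Rightarrow> 'k::zero) \<Rightarrow> nat \<Rightarrow> 'i \<Rightarrow> 'i set" where
  "desc om 0 i = {}"
| "desc om (Suc 0) i = {j. om j i \<noteq> 0}"
| "desc om (Suc (Suc n)) i = (\<Union>j\<in>desc om (Suc n) i. {l. om l j \<noteq> 0})"

definition descendents :: "('i \<Rightarrow> 'i \<Rightarrow> 'k::zero) \<Rightarrow> 'i \<Rightarrow> 'i set" where
  "descendents om i = (\<Union>n\<in>{1..}. desc om n i)"

definition evo_codim_one :: "('i \<Rightarrow> 'k::field) set \<Rightarrow> bool" where
  "evo_codim_one M \<longleftrightarrow> (\<exists>v\<in>evo_carrier. v \<notin> M \<and>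
     (\<forall>a\<in>evo_carrier. \<exists>c. a - evo_scale c v \<in> M))"

end

theory Submission
  imports Defs
begin

(* A maximal modular ideal M with modular unit u misses some basis vector e_i0, and the unit
   gives e_j = u_j e_j^2 modulo M for every j. If M also missed some e_j with j ~= i0, then
   u_j ~= 0, so M + K e_j would again be an ideal, hence all of A by maximality; writing
   e_i0 = c e_j modulo M and multiplying by e_i0 gives e_i0^2 in M, and then e_i0 in M.
   So M is the coordinate hyperplane x_i0 = 0. That hyperplane is an ideal exactly when
   om i0 k = 0 for all k ~= i0, i.e. when i0 is no descendent of another index, and it has a
   modular unit exactly when om i0 i0 ~= 0; it then is maximal because it has codimension one. *)

interpretation evo: module "evo_scale :: 'k::field \<Rightarrow> ('i \<Rightarrow> 'k) \<Rightarrow> _"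
  by unfold_locales (auto simp: evo_scale_def fun_eq_iff algebra_simps)

lemma evo_carrier_subspace: "evo.subspace evo_carrier"
  unfolding evo.subspace_def
proof (intro conjI ballI allI)
  fix x y :: "'i \<Rightarrow> 'k::field" and c :: 'k
  assume x: "x \<in> evo_carrier" and y: "y \<in> evo_carrier"
  have "{i. (x + y) i \<noteq> 0} \<subseteq> {i. x i \<noteq> 0} \<union> {i. y i \<noteq> 0}" by auto
  then show "x + y \<in> evo_carrier"
    using x y unfolding evo_carrier_def by (auto intro: finite_subset)
  have "{i. evo_scale c x i \<noteq> 0} \<subseteq> {i. x i \<noteq> 0}" by (auto simp: evo_scale_def)
  then show "evo_scale c x \<in> evo_carrier"
    using x unfolding evo_carrier_def by (auto intro: finite_subset)
qed (simp add: evo_carrier_def)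

lemmas evo_carrier_diff = evo.subspace_diff[OF evo_carrier_subspace]
lemmas evo_carrier_scale = evo.subspace_scale[OF evo_carrier_subspace]

lemma evo_scale_apply [simp]: "evo_scale c x j = c * x j"
  by (simp add: evo_scale_def)

lemma evo_basis_apply [simp]: "evo_basis i j = (if j = i then 1 else 0)"
  by (simp add: evo_basis_def)

lemma evo_basis_in_carrier [simp]: "evo_basis i \<in> evo_carrier"
  by (simp add: evo_carrier_def evo_basis_def)

lemma sum_fun_apply: "sum f A x = (\<Sum>a\<in>A. f a x)"
  by (induction A rule: infinite_finite_induct) auto

lemma evo_carrier_expand:
  assumes "x \<in> evo_carrier"
  shows "x = (\<Sum>i | x i \<noteq> 0. evo_scale (x i) (evo_basis i))"
proof
  fix j
  have "finite {i. x i \<noteq> 0}" using assms by (simp add: evo_carrier_def)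
  then show "x j = (\<Sum>i | x i \<noteq> 0. evo_scale (x i) (evo_basis i)) j"
    by (simp add: sum_fun_apply evo_scale_def if_distrib[of "\<lambda>t. _ * t"] cong: if_cong)
qed

abbreviation coord_hyperplane :: "'i \<Rightarrow> ('i \<Rightarrow> 'k::field) set" where
  "coord_hyperplane i0 \<equiv> {x \<in> evo_carrier. x i0 = 0}"

lemma coord_hyperplane_subspace: "evo.subspace (coord_hyperplane i0)"
  using evo_carrier_subspace unfolding evo.subspace_def by (auto simp: evo_scale_def)

lemma span_basis_Diff_eq_coord_hyperplane:
  "evo.span (evo_basis ` (UNIV - {i0})) = (coord_hyperplane i0 :: ('i \<Rightarrow> 'k::field) set)"
  (is "?span = ?H")
proof
  show "?span \<subseteq> ?H"
    by (rule evo.span_minimal) (auto simp: coord_hyperplane_subspace)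
  show "?H \<subseteq> ?span"
  proof
    fix x assume x: "x \<in> ?H"
    then have "x = (\<Sum>i | x i \<noteq> 0. evo_scale (x i) (evo_basis i))"
      using evo_carrier_expand by blast
    also have "\<dots> \<in> ?span"
      using x by (intro evo.span_sum evo.span_scale evo.span_base) auto
    finally show "x \<in> ?span" .
  qed
qed

lemma coord_hyperplane_codim_one:
  fixes i0 :: 'i
  shows "evo_codim_one (coord_hyperplane i0 :: ('i \<Rightarrow> 'k::field) set)"
  unfolding evo_codim_one_def
proof (intro bexI conjI ballI exI)
  fix a :: "'i \<Rightarrow> 'k::field" assume "a \<in> evo_carrier"
  then show "a - evo_scale (a i0) (evo_basis i0) \<in> coord_hyperplane i0"
    by (simp add: evo_carrier_diff evo_carrier_scale)
qed auto

lemma subspace_superset_coord_hyperplane: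
  fixes N :: "('i \<Rightarrow> 'k::field) set"
  assumes "evo.subspace N" "coord_hyperplane i0 \<subseteq> N" "x \<in> N" "x \<in> evo_carrier" "x i0 \<noteq> 0"
  shows "evo_carrier \<subseteq> N"
proof
  fix a :: "'i \<Rightarrow> 'k::field" assume a: "a \<in> evo_carrier"
  define c where "c = a i0 / x i0"
  have "a - evo_scale c x \<in> coord_hyperplane i0"
    using a assms(4,5) by (simp add: c_def evo_carrier_diff evo_carrier_scale)
  then have "(a - evo_scale c x) + evo_scale c x \<in> N"
    using assms(2,3) by (intro evo.subspace_add[OF assms(1)] evo.subspace_scale[OF assms(1)]) auto
  then show "a \<in> N" by simp
qed

lemma evo_mult_eq_sum_superset:
  assumes "finite F" "{i. x i \<noteq> 0} \<subseteq> F"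
  shows "evo_mult om x y = (\<lambda>k. \<Sum>i\<in>F. x i * y i * om k i)"
  unfolding evo_mult_def by (rule ext, rule sum.mono_neutral_left) (use assms in auto)

lemma evo_mult_commute:
  assumes "x \<in> evo_carrier" "y \<in> evo_carrier"
  shows "evo_mult om x y = evo_mult om y x"
proof -
  let ?F = "{i. x i \<noteq> 0} \<union> {i. y i \<noteq> 0}"
  have "finite ?F" using assms by (simp add: evo_carrier_def)
  then show ?thesis
    by (simp add: evo_mult_eq_sum_superset[of ?F] mult.commute)
qed

lemma evo_mult_basis_left: "evo_mult om (evo_basis j) y = evo_scale (y j) (\<lambda>k. om k j)"
  by (simp add: evo_mult_eq_sum_superset[of "{j}"] fun_eq_iff)

lemma evo_mult_basis_right:
  "y \<in> evo_carrier \<Longrightarrow> evo_mult om y (evo_basis j) = evo_scale (y j) (\<lambda>k. om k j)"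
  by (metis evo_mult_commute evo_basis_in_carrier evo_mult_basis_left)

lemma evo_mult_add_right: "evo_mult om a (x + y) = evo_mult om a x + evo_mult om a y"
  by (simp add: evo_mult_def fun_eq_iff distrib_left distrib_right sum.distrib)

lemma evo_mult_scale_right: "evo_mult om a (evo_scale c x) = evo_scale c (evo_mult om a x)"
  by (simp add: evo_mult_def fun_eq_iff sum_distrib_left mult_ac)

lemma evo_mult_in_carrier:
  assumes fin: "\<forall>i. finite {k. om k i \<noteq> 0}" and x: "x \<in> evo_carrier"
  shows "evo_mult om x y \<in> evo_carrier"
proof -
  have "{k. evo_mult om x y k \<noteq> 0} \<subseteq> (\<Union>i\<in>{i. x i \<noteq> 0}. {k. om k i \<noteq> 0})"
  proof
    fix k assume "k \<in> {k. evo_mult om x y k \<noteq> 0}"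
    then have "(\<Sum>i | x i \<noteq> 0. x i * y i * om k i) \<noteq> 0"
      by (simp add: evo_mult_def)
    then obtain i where "x i \<noteq> 0" "x i * y i * om k i \<noteq> 0"
      by (rule sum.not_neutral_contains_not_neutral) simp
    then show "k \<in> (\<Union>i\<in>{i. x i \<noteq> 0}. {k. om k i \<noteq> 0})" by auto
  qed
  moreover have "finite (\<Union>i\<in>{i. x i \<noteq> 0}. {k. om k i \<noteq> 0})"
    using fin x by (simp add: evo_carrier_def)
  ultimately have "finite {k. evo_mult om x y k \<noteq> 0}"
    by (rule finite_subset)
  then show ?thesis
    by (simp add: evo_carrier_def)
qed

lemma evo_column_in_carrier: "\<forall>i. finite {k. om k i \<noteq> 0} \<Longrightarrow> (\<lambda>k. om k j) \<in> evo_carrier"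
  by (simp add: evo_carrier_def)

lemma evo_idealI:
  fixes om :: "'i \<Rightarrow> 'i \<Rightarrow> 'k::field"
  assumes "M \<subseteq> evo_carrier" "evo.subspace M"
    and "\<And>a m. a \<in> evo_carrier \<Longrightarrow> m \<in> M \<Longrightarrow> evo_mult om a m \<in> M"
  shows "evo_ideal om M"
  unfolding evo_ideal_def
proof (intro conjI ballI)
  fix a m :: "'i \<Rightarrow> 'k" assume "a \<in> evo_carrier" "m \<in> M"
  with assms show "evo_mult om a m \<in> M" "evo_mult om m a \<in> M"
    by (simp_all add: evo_mult_commute[of m a] subsetD)
qed (use assms in auto)

lemma evo_modular_unit_basis:
  assumes "evo_modular_unit om M u"
  shows "evo_basis j - evo_scale (u j) (\<lambda>k. om k j) \<in> M"
proof -
  have "evo_basis j - evo_mult om (evo_basis j) u \<in> M"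
    using assms by (simp add: evo_modular_unit_def)
  then show ?thesis by (simp add: evo_mult_basis_left)
qed

lemma evo_basis_mem_if_square_mem:
  assumes "evo.subspace M" "evo_modular_unit om M u" "(\<lambda>k. om k j) \<in> M"
  shows "evo_basis j \<in> M"
proof -
  have "(evo_basis j - evo_scale (u j) (\<lambda>k. om k j)) + evo_scale (u j) (\<lambda>k. om k j) \<in> M"
    using assms evo_modular_unit_basis[OF assms(2)]
    by (intro evo.subspace_add[OF assms(1)] evo.subspace_scale[OF assms(1)])
  then show ?thesis by simp
qed

lemma coord_hyperplane_ideal:
  fixes om :: "'i \<Rightarrow> 'i \<Rightarrow> 'k::field"
  assumes fin: "\<forall>i. finite {k. om k i \<noteq> 0}" and col: "\<forall>k. k \<noteq> i0 \<longrightarrow> om i0 k = 0"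
  shows "evo_ideal om (coord_hyperplane i0)"
proof (rule evo_idealI)
  fix a m :: "'i \<Rightarrow> 'k" assume a: "a \<in> evo_carrier" and m: "m \<in> coord_hyperplane i0"
  have "evo_mult om a m i0 = (\<Sum>i | a i \<noteq> 0. a i * m i * om i0 i)"
    by (simp add: evo_mult_def)
  also have "\<dots> = 0"
    using m col by (intro sum.neutral) auto
  finally show "evo_mult om a m \<in> coord_hyperplane i0"
    using evo_mult_in_carrier[OF fin a] by simp
qed (auto simp: coord_hyperplane_subspace)

lemma coord_hyperplane_modular_unit:
  fixes om :: "'i \<Rightarrow> 'i \<Rightarrow> 'k::field"
  assumes fin: "\<forall>i. finite {k. om k i \<noteq> 0}" and "om i0 i0 \<noteq> 0"
  shows "evo_modular_unit om (coord_hyperplane i0) (evo_scale (1 / om i0 i0) (evo_basis i0))"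
  unfolding evo_modular_unit_def
proof (intro conjI ballI)
  fix a :: "'i \<Rightarrow> 'k" assume a: "a \<in> evo_carrier"
  have "evo_mult om a (evo_scale (1 / om i0 i0) (evo_basis i0))
      = evo_scale (1 / om i0 i0) (evo_scale (a i0) (\<lambda>k. om k i0))"
    by (simp add: a evo_mult_scale_right evo_mult_basis_right)
  with assms(2) show "a - evo_mult om a (evo_scale (1 / om i0 i0) (evo_basis i0)) \<in> coord_hyperplane i0"
    using a fin by (simp add: evo_carrier_diff evo_carrier_scale evo_column_in_carrier)
qed (simp add: evo_carrier_scale)

lemma maximal_modular_coord_hyperplane_iff:
  fixes om :: "'i \<Rightarrow> 'i \<Rightarrow> 'k::field"
  assumes fin: "\<forall>i. finite {k. om k i \<noteq> 0}"
  shows "evo_maximal_modular om (coord_hyperplane i0) \<longleftrightarrow>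
    om i0 i0 \<noteq> 0 \<and> (\<forall>k. k \<noteq> i0 \<longrightarrow> om i0 k = 0)"
proof
  assume "evo_maximal_modular om (coord_hyperplane i0)"
  then obtain u where ideal: "evo_ideal om (coord_hyperplane i0)"
    and u: "evo_modular_unit om (coord_hyperplane i0) u"
    by (auto simp: evo_maximal_modular_def evo_proper_modular_def evo_modular_ideal_def)
  have "1 - u i0 * om i0 i0 = 0"
    using evo_modular_unit_basis[OF u, of i0] by simp
  then have "om i0 i0 \<noteq> 0" by auto
  moreover have "om i0 k = 0" if "k \<noteq> i0" for k
  proof -
    have "evo_mult om (evo_basis k) (evo_basis k) \<in> coord_hyperplane i0"
      using ideal that by (simp add: evo_ideal_def)
    then show ?thesis by (simp add: evo_mult_basis_left)
  qed
  ultimately show "om i0 i0 \<noteq> 0 \<and> (\<forall>k. k \<noteq> i0 \<longrightarrow> om i0 k = 0)" by blast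
next
  assume om: "om i0 i0 \<noteq> 0 \<and> (\<forall>k. k \<noteq> i0 \<longrightarrow> om i0 k = 0)"
  have "evo_basis i0 \<notin> (coord_hyperplane i0 :: ('i \<Rightarrow> 'k) set)"
    by simp
  then have "(coord_hyperplane i0 :: ('i \<Rightarrow> 'k) set) \<noteq> evo_carrier"
    using evo_basis_in_carrier[of i0] by blast
  with om have proper: "evo_proper_modular om (coord_hyperplane i0)"
    using coord_hyperplane_ideal[OF fin] coord_hyperplane_modular_unit[OF fin]
    unfolding evo_proper_modular_def evo_modular_ideal_def by blast
  have "N = coord_hyperplane i0"
    if N: "evo_proper_modular om N" "coord_hyperplane i0 \<subseteq> N" for N
  proof (rule ccontr)
    assume "N \<noteq> coord_hyperplane i0"
    then obtain x where x: "x \<in> N" "x \<notin> coord_hyperplane i0" using N(2) by blast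
    have sub: "N \<subseteq> evo_carrier" "evo.subspace N" and "N \<noteq> evo_carrier"
      using N(1) by (auto simp: evo_proper_modular_def evo_modular_ideal_def evo_ideal_def)
    moreover have "evo_carrier \<subseteq> N"
      using x sub by (intro subspace_superset_coord_hyperplane[OF sub(2) N(2) x(1)]) auto
    ultimately show False by blast
  qed
  with proper show "evo_maximal_modular om (coord_hyperplane i0)"
    by (auto simp: evo_maximal_modular_def)
qed

lemma evo_ideal_span_insert_basis:
  fixes om :: "'i \<Rightarrow> 'i \<Rightarrow> 'k::field"
  assumes M: "evo_ideal om M" and u: "evo_modular_unit om M u" and notin: "evo_basis j \<notin> M"
  shows "evo_ideal om (evo.span (insert (evo_basis j) M))"
proof (rule evo_idealI)
  have sub: "evo.subspace M" "M \<subseteq> evo_carrier"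
    using M by (auto simp: evo_ideal_def)
  then have span_M: "evo.span M = M" by simp
  show "evo.span (insert (evo_basis j) M) \<subseteq> evo_carrier"
    using sub(2) evo_carrier_subspace by (intro evo.span_minimal) auto
  have "u j \<noteq> 0"
    using evo_modular_unit_basis[OF u, of j] notin by auto
  fix a x :: "'i \<Rightarrow> 'k"
  assume a: "a \<in> evo_carrier" and x: "x \<in> evo.span (insert (evo_basis j) M)"
  then obtain c where m: "x - evo_scale c (evo_basis j) \<in> M"
    unfolding evo.span_breakdown_eq span_M by blast
  define d where "d = c * a j / u j"
  \<comment> \<open>modulo M the unit turns e_j^2 into e_j / u_j, so a x is congruent to d e_j\<close>
  have "evo_mult om a x
      = evo_mult om a (x - evo_scale c (evo_basis j)) + evo_scale c (evo_scale (a j) (\<lambda>k. om k j))"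
    using evo_mult_add_right[of om a "x - evo_scale c (evo_basis j)" "evo_scale c (evo_basis j)"]
    by (simp add: evo_mult_scale_right evo_mult_basis_right[OF a])
  then have "evo_mult om a x - evo_scale d (evo_basis j)
      = evo_mult om a (x - evo_scale c (evo_basis j))
        - evo_scale d (evo_basis j - evo_scale (u j) (\<lambda>k. om k j))"
    using \<open>u j \<noteq> 0\<close> by (simp add: fun_eq_iff d_def field_simps)
  also have "\<dots> \<in> M"
    using M m a evo.subspace_scale[OF sub(1) evo_modular_unit_basis[OF u]]
    by (intro evo.subspace_diff[OF sub(1)]) (auto simp: evo_ideal_def)
  finally show "evo_mult om a x \<in> evo.span (insert (evo_basis j) M)"
    unfolding evo.span_breakdown_eq span_M by blast
qed simp

lemma maximal_modular_span_insert_basis: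
  fixes om :: "'i \<Rightarrow> 'i \<Rightarrow> 'k::field"
  assumes max: "evo_maximal_modular om M" and notin: "evo_basis j \<notin> M"
  shows "evo.span (insert (evo_basis j) M) = evo_carrier"
proof (rule ccontr)
  let ?N = "evo.span (insert (evo_basis j) M)"
  assume proper: "?N \<noteq> evo_carrier"
  obtain u where ideal: "evo_ideal om M" and u: "evo_modular_unit om M u"
    using max by (auto simp: evo_maximal_modular_def evo_proper_modular_def evo_modular_ideal_def)
  have "M \<subseteq> ?N"
    using evo.span_superset by blast
  then have "evo_modular_unit om ?N u"
    using u by (auto simp: evo_modular_unit_def)
  then have "evo_proper_modular om ?N"
    using evo_ideal_span_insert_basis[OF ideal u notin] proper
    by (auto simp: evo_proper_modular_def evo_modular_ideal_def)
  with max \<open>M \<subseteq> ?N\<close> have "?N = M"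
    by (auto simp: evo_maximal_modular_def)
  with notin show False
    using evo.span_base[of "evo_basis j" "insert (evo_basis j) M"] by simp
qed

lemma maximal_modular_basis_mem:
  fixes om :: "'i \<Rightarrow> 'i \<Rightarrow> 'k::field"
  assumes max: "evo_maximal_modular om M"
    and i0: "evo_basis i0 \<notin> M" and "j \<noteq> i0"
  shows "evo_basis j \<in> M"
proof (rule ccontr)
  assume "evo_basis j \<notin> M"
  then have "evo_basis i0 \<in> evo.span (insert (evo_basis j) M)"
    using maximal_modular_span_insert_basis[OF max] by simp
  moreover obtain u where ideal: "evo_ideal om M" and u: "evo_modular_unit om M u"
    using max by (auto simp: evo_maximal_modular_def evo_proper_modular_def evo_modular_ideal_def)
  moreover have span_M: "evo.span M = M"
    using ideal by (simp add: evo_ideal_def)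
  ultimately obtain c where m: "evo_basis i0 - evo_scale c (evo_basis j) \<in> M"
    unfolding evo.span_breakdown_eq by auto
  have "evo_mult om (evo_basis i0) (evo_basis i0 - evo_scale c (evo_basis j)) = (\<lambda>k. om k i0)"
    using \<open>j \<noteq> i0\<close> by (simp add: evo_mult_basis_left fun_eq_iff)
  then have "(\<lambda>k. om k i0) \<in> M"
    using ideal m by (metis evo_basis_in_carrier evo_ideal_def)
  with ideal u i0 show False
    using evo_basis_mem_if_square_mem[of M om u i0] by (simp add: evo_ideal_def)
qed

lemma maximal_modular_eq_coord_hyperplane:
  fixes om :: "'i \<Rightarrow> 'i \<Rightarrow> 'k::field"
  assumes max: "evo_maximal_modular om M"
  shows "\<exists>i0. M = coord_hyperplane i0"
proof -
  have sub: "evo.subspace M" "M \<subseteq> evo_carrier" and proper: "M \<noteq> evo_carrier"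
    using max by (auto simp: evo_maximal_modular_def evo_proper_modular_def
        evo_modular_ideal_def evo_ideal_def)
  obtain i0 where i0: "evo_basis i0 \<notin> M"
  proof (rule ccontr)
    assume "\<not> thesis"
    with that have "evo_basis i \<in> M" for i by blast
    then have "x \<in> M" if "x \<in> evo_carrier" for x
      using evo_carrier_expand[OF that] sub(1)
      by (metis (no_types, lifting) evo.subspace_scale evo.subspace_sum)
    with sub(2) proper show False by blast
  qed
  have "coord_hyperplane i0 \<subseteq> M"
    unfolding span_basis_Diff_eq_coord_hyperplane[symmetric]
    using maximal_modular_basis_mem[OF max i0] sub(1) by (intro evo.span_minimal) auto
  moreover have "M \<subseteq> coord_hyperplane i0"
    using subspace_superset_coord_hyperplane[OF sub(1) \<open>coord_hyperplane i0 \<subseteq> M\<close>]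
      sub(2) proper by blast
  ultimately show ?thesis by blast
qed

lemma notin_descendents_iff:
  "(\<forall>k. k \<noteq> i0 \<longrightarrow> i0 \<notin> descendents om k) \<longleftrightarrow> (\<forall>k. k \<noteq> i0 \<longrightarrow> om i0 k = 0)"
proof
  assume "\<forall>k. k \<noteq> i0 \<longrightarrow> i0 \<notin> descendents om k"
  moreover have "desc om (Suc 0) k \<subseteq> descendents om k" for k
    unfolding descendents_def by (rule UN_upper) simp
  ultimately show "\<forall>k. k \<noteq> i0 \<longrightarrow> om i0 k = 0" by auto
next
  assume col: "\<forall>k. k \<noteq> i0 \<longrightarrow> om i0 k = 0"
  have "i0 \<notin> desc om (Suc n) k" if "k \<noteq> i0" for n k
  proof (induction n)
    case 0
    with col that show ?case by simp
  next
    case (Suc n)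
    with col show ?case by auto
  qed
  then show "\<forall>k. k \<noteq> i0 \<longrightarrow> i0 \<notin> descendents om k"
    unfolding descendents_def by (auto simp: Suc_le_eq dest!: gr0_implies_Suc)
qed

theorem corollary3p8:
  fixes om :: "'i \<Rightarrow> 'i \<Rightarrow> 'k::real_normed_field"
  assumes "\<forall>i. finite {k. om k i \<noteq> 0}"
  shows "(\<forall>M. evo_maximal_modular om M \<longleftrightarrow>
            (\<exists>i0. om i0 i0 \<noteq> 0 \<and> (\<forall>k. k \<noteq> i0 \<longrightarrow> i0 \<notin> descendents om k) \<and>
                  M = module.span evo_scale (evo_basis ` (UNIV - {i0}))))
       \<and> (\<forall>M i0. om i0 i0 \<noteq> 0 \<and> (\<forall>k. k \<noteq> i0 \<longrightarrow> i0 \<notin> descendents om k) \<and>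
                  M = module.span evo_scale (evo_basis ` (UNIV - {i0}))
              \<longrightarrow> evo_modular_unit om M (evo_scale (1 / om i0 i0) (evo_basis i0)))
       \<and> (\<forall>M. evo_maximal_modular om M \<longrightarrow> evo_codim_one M)"
proof -
  have maximal_iff: "om i0 i0 \<noteq> 0 \<and> (\<forall>k. k \<noteq> i0 \<longrightarrow> i0 \<notin> descendents om k)
      \<longleftrightarrow> evo_maximal_modular om (coord_hyperplane i0)" for i0
    by (simp add: notin_descendents_iff maximal_modular_coord_hyperplane_iff[OF assms])
  show ?thesis
    unfolding span_basis_Diff_eq_coord_hyperplane conj_assoc[symmetric] maximal_iff
  proof (intro conjI allI impI)
    show "evo_maximal_modular om M \<longleftrightarrow>
        (\<exists>i0. evo_maximal_modular om (coord_hyperplane i0) \<and> M = coord_hyperplane i0)" for M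
      using maximal_modular_eq_coord_hyperplane by blast
    show "evo_modular_unit om M (evo_scale (1 / om i0 i0) (evo_basis i0))"
      if "evo_maximal_modular om (coord_hyperplane i0) \<and> M = coord_hyperplane i0" for M i0
      using that coord_hyperplane_modular_unit[OF assms]
      by (simp add: maximal_modular_coord_hyperplane_iff[OF assms])
    show "evo_codim_one M" if "evo_maximal_modular om M" for M
      using maximal_modular_eq_coord_hyperplane[OF that] coord_hyperplane_codim_one by metis
  qed
qed

end
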